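(* Let $A,A_1,A_2,\ldots$ be band operators on $\ell^2(\mathbb{Z})$ such that $\sup_m\|A_m\|<\infty$ and the band-widths of $A$ and all $A_m$ are bounded by a common $w\in\mathbb{N}$. If \[ \forall N\in\mathbb{N}\ \exists m_0\in\mathbb{N}\ \forall m\ge m_0:\quad\mathcal{C}_N(A_m)=\mathcal{C}_N(A), \] then $\nu(A_m)\to\nu(A)$ and, in fact, $\nu(A_m-\lambda)\to\nu(A-\lambda)$ for every $\lambda\in\mathbb{C}$, as $m\to\infty$.
   Context: A band operator on $\ell^2(\mathbb{Z})$ with band-width at most $w$ is a bounded operator whose matrix entries satisfy $A_{ij}=0$ for $|i-j|>w$. The lower norm is $\nu(T):=\inf\{\|Tx\|:\|x\|=1\}$. For $N\in\mathbb{N}$, $\mathcal{C}_N(A)$ is the set of all $(N+2w)\times N$ matrices $C=(C_{ij})_{i\in1-w..N+w,\,j\in1..N}$ with $C_{ij}=A_{k+i,k+j}$ for some $k\in\mathbb{Z}$ (the "$N$-column submatrices" of $A$), where $a..b:=\{n\in\mathbb{Z}:a\le n\le b\}$. *)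

theory Defs
  imports "HOL-Analysis.Analysis"
begin

definition l2 :: "(int \<Rightarrow> complex) set" where
  "l2 = {x. (\<lambda>i. (cmod (x i))\<^sup>2) summable_on UNIV}"

definition l2norm :: "(int \<Rightarrow> complex) \<Rightarrow> real" where
  "l2norm x = sqrt (\<Sum>\<^sub>\<infinity>i. (cmod (x i))\<^sup>2)"

text \<open>Operators are represented by their (infinite) matrices a i j; the action on a
  sequence x is (A x)_i = sum_j a_ij x_j.\<close>
definition mat_apply :: "(int \<Rightarrow> int \<Rightarrow> complex) \<Rightarrow> (int \<Rightarrow> complex) \<Rightarrow> (int \<Rightarrow> complex)" where
  "mat_apply a x = (\<lambda>i. \<Sum>\<^sub>\<infinity>j. a i j * x j)"

definition band_op :: "nat \<Rightarrow> (int \<Rightarrow> int \<Rightarrow> complex) \<Rightarrow> bool" where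
  "band_op w a \<longleftrightarrow> (\<forall>i j. \<bar>i - j\<bar> > int w \<longrightarrow> a i j = 0) \<and>
     (\<exists>C. \<forall>x\<in>l2. mat_apply a x \<in> l2 \<and> l2norm (mat_apply a x) \<le> C * l2norm x)"

definition opnorm :: "(int \<Rightarrow> int \<Rightarrow> complex) \<Rightarrow> real" where
  "opnorm a = Sup {l2norm (mat_apply a x) | x. x \<in> l2 \<and> l2norm x = 1}"

definition lower_norm :: "(int \<Rightarrow> int \<Rightarrow> complex) \<Rightarrow> real" where
  "lower_norm a = Inf {l2norm (mat_apply a x) | x. x \<in> l2 \<and> l2norm x = 1}"

definition shift_id :: "(int \<Rightarrow> int \<Rightarrow> complex) \<Rightarrow> complex \<Rightarrow> (int \<Rightarrow> int \<Rightarrow> complex)" where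
  "shift_id a lam = (\<lambda>i j. a i j - (if i = j then lam else 0))"

text \<open>N-column submatrices: (N+2w) x N matrices with rows 1-w..N+w and columns 1..N,
  C_ij = A_{k+i,k+j}; represented as functions that vanish outside the index rectangle.\<close>
definition col_submatrices :: "nat \<Rightarrow> nat \<Rightarrow> (int \<Rightarrow> int \<Rightarrow> complex) \<Rightarrow> (int \<Rightarrow> int \<Rightarrow> complex) set" where
  "col_submatrices w N a = {(\<lambda>i j. if i \<in> {1 - int w .. int N + int w} \<and> j \<in> {1 .. int N}
                                     then a (k + i) (k + j) else 0) | k. True}"

end

(*
  Cutting vectors into windows of N consecutive sites shows that the lower norm of a band
  operator a of band-width w is approximated, to within 4 K sqrt(w/N), by the norms ||a x||
  of unit vectors x supported on a window, where K bounds the norm of a.  Indeed, let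
  ||a x|| <= mu ||x|| and let P_s project onto {s+1..s+N}.  Summing over s, every site is
  counted N times, while the commutator a P_s x - P_s a x only involves entries of x within
  distance w of the ends of the window, and each site is that close to the ends of at most
  4w windows.  The triangle inequality in l2 over s then yields a window with
  ||a P_s x|| <= (mu + 4 K sqrt(w/N)) ||P_s x||.  Since the window norms only depend on the
  N-column submatrices, |nu(A_m) - nu(A)| <= 4 K sqrt(w/N) as soon as C_N(A_m) = C_N(A);
  all hypotheses survive the passage from a to a - lam I.
*)

theory Submission
  imports Defs
begin

section \<open>Banded matrices acting on finitely supported sequences\<close>

definition banded :: "nat \<Rightarrow> (int \<Rightarrow> int \<Rightarrow> complex) \<Rightarrow> bool" where
  "banded w a \<longleftrightarrow> (\<forall>i j. \<bar>i - j\<bar> > int w \<longrightarrow> a i j = 0)"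

definition fin_support :: "(int \<Rightarrow> complex) \<Rightarrow> bool" where
  "fin_support x \<longleftrightarrow> finite {j. x j \<noteq> 0}"

definition proj_on :: "int set \<Rightarrow> (int \<Rightarrow> complex) \<Rightarrow> int \<Rightarrow> complex" where
  "proj_on X x = (\<lambda>j. if j \<in> X then x j else 0)"

lemma band_op_banded: "band_op w a \<Longrightarrow> banded w a"
  by (simp add: band_op_def banded_def)

lemma band_op_boundedE:
  assumes "band_op w a"
  obtains C where "\<And>x. x \<in> l2 \<Longrightarrow> mat_apply a x \<in> l2 \<and> l2norm (mat_apply a x) \<le> C * l2norm x"
  using assms by (auto simp: band_op_def)

lemma l2norm_nonneg: "0 \<le> l2norm x"
  unfolding l2norm_def by (simp add: infsum_nonneg)

lemma infsum_eq_sum_if_vanishing: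
  assumes "finite X" "\<And>j. j \<notin> X \<Longrightarrow> f j = 0"
  shows "infsum f UNIV = sum f X"
proof -
  have "infsum f UNIV = infsum f X"
    by (rule infsum_cong_neutral) (use assms in auto)
  then show ?thesis using assms by simp
qed

lemma l2norm_sq_eq_sum:
  assumes "finite X" "\<And>j. j \<notin> X \<Longrightarrow> x j = 0"
  shows "(l2norm x)\<^sup>2 = (\<Sum>j\<in>X. (cmod (x j))\<^sup>2)"
  unfolding l2norm_def using assms
  by (subst infsum_eq_sum_if_vanishing[OF assms(1)]) (auto simp: sum_nonneg)

lemma fin_supportI:
  assumes "finite X" "\<And>j. j \<notin> X \<Longrightarrow> x j = 0"
  shows "fin_support x"
  unfolding fin_support_def by (rule finite_subset[OF _ assms(1)]) (use assms(2) in blast)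

lemma finite_int_subset_interval:
  fixes F :: "int set"
  assumes "finite F"
  obtains n where "F \<subseteq> {-n..n}"
proof
  show "F \<subseteq> {-(\<Sum>j\<in>F. \<bar>j\<bar>)..\<Sum>j\<in>F. \<bar>j\<bar>}"
    using member_le_sum[of _ F abs] assms by (force simp: abs_le_iff)
qed

lemma fin_support_intervalE:
  assumes "fin_support x"
  obtains n where "\<And>j. j \<notin> {-n..n} \<Longrightarrow> x j = 0"
proof -
  obtain n where "{j. x j \<noteq> 0} \<subseteq> {-n..n}"
    using assms finite_int_subset_interval unfolding fin_support_def by blast
  then show ?thesis by (intro that) blast
qed

lemma fin_support_imp_l2:
  assumes "fin_support x"
  shows "x \<in> l2"
proof -
  have "(\<lambda>j. (cmod (x j))\<^sup>2) summable_on {j. x j \<noteq> 0}"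
    using assms by (simp add: fin_support_def)
  then show ?thesis
    unfolding l2_def mem_Collect_eq by (rule summable_on_cong_neutral[THEN iffD1, rotated -1]) auto
qed

lemma fin_support_proj_on: "fin_support x \<Longrightarrow> fin_support (proj_on X x)"
  unfolding fin_support_def proj_on_def by (rule finite_subset[rotated]) auto

lemma mat_apply_banded:
  assumes "banded w a"
  shows "mat_apply a x i = (\<Sum>j\<in>{i - int w..i + int w}. a i j * x j)"
  unfolding mat_apply_def
  by (rule infsum_eq_sum_if_vanishing) (use assms in \<open>auto simp: banded_def abs_if\<close>)

lemma mat_apply_eq_sum:
  assumes "finite X" "\<And>j. j \<notin> X \<Longrightarrow> x j = 0"
  shows "mat_apply a x i = (\<Sum>j\<in>X. a i j * x j)"
  unfolding mat_apply_def by (rule infsum_eq_sum_if_vanishing) (use assms in auto)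

lemma mat_apply_eq_0:
  assumes "banded w a" "\<And>j. j \<notin> {p..q} \<Longrightarrow> x j = 0" "i \<notin> {p - int w..q + int w}"
  shows "mat_apply a x i = 0"
proof -
  have "mat_apply a x i = (\<Sum>j\<in>{p..q}. a i j * x j)"
    by (rule mat_apply_eq_sum) (use assms in auto)
  also have "\<dots> = 0"
    by (rule sum.neutral) (use assms in \<open>auto simp: banded_def\<close>)
  finally show ?thesis .
qed

lemma fin_support_mat_apply:
  assumes "banded w a" "fin_support x"
  shows "fin_support (mat_apply a x)"
proof -
  obtain n where "\<And>j. j \<notin> {-n..n} \<Longrightarrow> x j = 0"
    using fin_support_intervalE[OF assms(2)] by blast
  then show ?thesis
    by (intro fin_supportI[of "{-n - int w..n + int w}"] mat_apply_eq_0[OF assms(1)]) auto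
qed

lemma mat_apply_add:
  assumes "banded w a"
  shows "mat_apply a (\<lambda>j. x j + y j) i = mat_apply a x i + mat_apply a y i"
  unfolding mat_apply_banded[OF assms] by (simp add: distrib_left sum.distrib)

lemma mat_apply_cmult:
  assumes "banded w a"
  shows "mat_apply a (\<lambda>j. c * x j) i = c * mat_apply a x i"
  unfolding mat_apply_banded[OF assms] by (simp add: algebra_simps sum_distrib_left)

lemma l2norm_cmult: "l2norm (\<lambda>i. c * x i) = cmod c * l2norm x"
  by (simp add: l2norm_def norm_mult power_mult_distrib infsum_cmult_right' real_sqrt_mult)

lemma l2_cmult: "x \<in> l2 \<Longrightarrow> (\<lambda>i. c * x i) \<in> l2"
  by (simp add: l2_def norm_mult power_mult_distrib summable_on_cmult_right)

lemma L2_set_le_l2norm: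
  assumes "x \<in> l2" "finite F"
  shows "L2_set (\<lambda>i. cmod (x i)) F \<le> l2norm x"
  unfolding L2_set_def l2norm_def
  by (rule real_sqrt_le_mono, rule finite_sum_le_infsum) (use assms in \<open>auto simp: l2_def\<close>)

lemma l2_add:
  assumes "x \<in> l2" "y \<in> l2"
  shows "(\<lambda>i. x i + y i) \<in> l2" and "l2norm (\<lambda>i. x i + y i) \<le> l2norm x + l2norm y"
proof -
  define B where "B = l2norm x + l2norm y"
  have B: "0 \<le> B" unfolding B_def by (simp add: l2norm_nonneg add_nonneg_nonneg)
  have partial: "(\<Sum>i\<in>F. (cmod (x i + y i))\<^sup>2) \<le> B\<^sup>2" if "finite F" for F
  proof -
    have "L2_set (\<lambda>i. cmod (x i + y i)) F \<le> L2_set (\<lambda>i. cmod (x i) + cmod (y i)) F"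
      by (rule L2_set_mono) (auto simp: norm_triangle_ineq)
    also have "\<dots> \<le> L2_set (\<lambda>i. cmod (x i)) F + L2_set (\<lambda>i. cmod (y i)) F"
      by (rule L2_set_triangle_ineq)
    also have "\<dots> \<le> B"
      unfolding B_def using L2_set_le_l2norm[OF assms(1) that] L2_set_le_l2norm[OF assms(2) that]
      by linarith
    finally show ?thesis
      unfolding L2_set_def by (rule sqrt_le_D)
  qed
  have sm: "(\<lambda>i. (cmod (x i + y i))\<^sup>2) summable_on UNIV"
    by (rule nonneg_bdd_above_summable_on) (use partial in \<open>auto intro!: bdd_aboveI\<close>)
  then show "(\<lambda>i. x i + y i) \<in> l2" by (simp add: l2_def)
  have "(\<Sum>\<^sub>\<infinity>i. (cmod (x i + y i))\<^sup>2) \<le> B\<^sup>2"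
    by (rule infsum_le_finite_sums[OF sm]) (simp add: partial)
  then have "sqrt (\<Sum>\<^sub>\<infinity>i. (cmod (x i + y i))\<^sup>2) \<le> B"
    by (rule real_le_lsqrt[OF B])
  then show "l2norm (\<lambda>i. x i + y i) \<le> l2norm x + l2norm y"
    by (simp add: l2norm_def B_def)
qed

lemma l2_diff:
  assumes "x \<in> l2" "y \<in> l2"
  shows "(\<lambda>i. x i - y i) \<in> l2" and "l2norm (\<lambda>i. x i - y i) \<le> l2norm x + l2norm y"
  using l2_add[OF assms(1) l2_cmult[OF assms(2), of "-1"]] l2norm_cmult[of "-1" y]
  by simp_all

lemma l2_proj_on:
  assumes "x \<in> l2"
  shows "proj_on X x \<in> l2" and "l2norm (proj_on X x) \<le> l2norm x"
proof -
  have x: "(\<lambda>j. (cmod (x j))\<^sup>2) summable_on UNIV" using assms by (simp add: l2_def)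
  have le: "(cmod (proj_on X x j))\<^sup>2 \<le> (cmod (x j))\<^sup>2" for j
    by (simp add: proj_on_def)
  have "(\<lambda>j. (cmod (proj_on X x j))\<^sup>2) summable_on UNIV"
    by (rule summable_on_comparison_test[OF x le]) simp
  then show "proj_on X x \<in> l2" "l2norm (proj_on X x) \<le> l2norm x"
    unfolding l2_def l2norm_def using x le by (auto intro!: real_sqrt_le_mono infsum_mono)
qed

lemma l2norm_translate: "l2norm (\<lambda>j. x (j + d)) = l2norm x"
proof -
  have "range (\<lambda>j::int. j + d) = UNIV"
    by (metis surj_def diff_add_cancel)
  then have "(\<Sum>\<^sub>\<infinity>j. (cmod (x (j + d)))\<^sup>2) = (\<Sum>\<^sub>\<infinity>j. (cmod (x j))\<^sup>2)"
    using infsum_reindex[of "\<lambda>j. j + d" UNIV "\<lambda>j. (cmod (x j))\<^sup>2"]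
    by (simp add: comp_def)
  then show ?thesis by (simp add: l2norm_def)
qed

section \<open>The lower norm\<close>

lemma fin_support_unit_vector: "fin_support (\<lambda>j. if j = k then 1 else 0)"
  by (rule fin_supportI[of "{k}"]) auto

lemma l2norm_unit_vector: "l2norm (\<lambda>j. if j = k then 1 else 0) = 1"
proof -
  have "(l2norm (\<lambda>j. if j = k then 1 else 0))\<^sup>2 = 1"
    by (subst l2norm_sq_eq_sum[of "{k}"]) auto
  then show ?thesis
    using l2norm_nonneg[of "\<lambda>j. if j = k then 1 else 0"] by (simp add: power2_eq_1_iff)
qed

lemma lower_norm_nonneg: "0 \<le> lower_norm a"
proof -
  have "{l2norm (mat_apply a x) |x. x \<in> l2 \<and> l2norm x = 1} \<noteq> {}"
    using fin_support_unit_vector l2norm_unit_vector fin_support_imp_l2 by blast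
  then show ?thesis
    unfolding lower_norm_def by (rule cInf_greatest) (auto simp: l2norm_nonneg)
qed

lemma normalized_vector:
  assumes "banded w a" "x \<in> l2" "l2norm x > 0"
  defines "y \<equiv> \<lambda>j. complex_of_real (1 / l2norm x) * x j"
  shows "y \<in> l2" and "l2norm y = 1"
    and "l2norm (mat_apply a y) = l2norm (mat_apply a x) / l2norm x"
proof -
  show "y \<in> l2" unfolding y_def by (rule l2_cmult[OF assms(2)])
  show "l2norm y = 1" unfolding y_def l2norm_cmult using assms(3) by (simp add: norm_divide)
  have "mat_apply a y = (\<lambda>i. complex_of_real (1 / l2norm x) * mat_apply a x i)"
    unfolding y_def using mat_apply_cmult[OF assms(1)] by blast
  then have "l2norm (mat_apply a y) = cmod (complex_of_real (1 / l2norm x)) * l2norm (mat_apply a x)"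
    by (simp only: l2norm_cmult)
  then show "l2norm (mat_apply a y) = l2norm (mat_apply a x) / l2norm x"
    using assms(3) by (simp add: norm_divide)
qed

lemma l2norm_tail_le:
  assumes "x \<in> l2" "\<delta> > 0"
  obtains n where "l2norm (proj_on (- {-n..n}) x) \<le> \<delta>"
proof -
  let ?f = "\<lambda>j. (cmod (x j))\<^sup>2"
  have sm: "?f summable_on UNIV" using assms(1) by (simp add: l2_def)
  obtain F where F: "finite F" "dist (sum ?f F) (infsum ?f UNIV) \<le> \<delta>\<^sup>2"
    using infsum_finite_approximation[OF sm, of "\<delta>\<^sup>2"] assms(2) by auto
  obtain n where n: "F \<subseteq> {-n..n}" using finite_int_subset_interval[OF F(1)] by blast
  define X where "X = {-n..n}"
  have "sum ?f F \<le> sum ?f X" by (rule sum_mono2) (use n in \<open>auto simp: X_def\<close>)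
  moreover have "infsum ?f UNIV = sum ?f X + infsum ?f (- X)"
    using infsum_Un_disjoint[of ?f X "- X"] summable_on_subset_banach[OF sm]
    by (simp add: X_def)
  ultimately have "infsum ?f (- X) \<le> \<delta>\<^sup>2" using F(2) by (simp add: dist_real_def)
  moreover have "infsum (\<lambda>j. (cmod (proj_on (- X) x j))\<^sup>2) UNIV = infsum ?f (- X)"
    by (rule infsum_cong_neutral) (auto simp: proj_on_def)
  ultimately have "l2norm (proj_on (- X) x) \<le> \<delta>"
    unfolding l2norm_def using assms(2) by (simp add: real_le_lsqrt)
  then show ?thesis using that by (simp add: X_def)
qed

lemma truncation_l2norm_bounds:
  assumes "banded w a"
    and C: "\<And>x. x \<in> l2 \<Longrightarrow> mat_apply a x \<in> l2 \<and> l2norm (mat_apply a x) \<le> C * l2norm x"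
    and "0 \<le> C" "x \<in> l2" "l2norm (proj_on (- X) x) \<le> \<delta>"
  shows "l2norm (mat_apply a (proj_on X x)) \<le> l2norm (mat_apply a x) + C * \<delta>"
    and "l2norm x - \<delta> \<le> l2norm (proj_on X x)"
proof -
  let ?y = "proj_on X x" and ?t = "proj_on (- X) x"
  have split: "x = (\<lambda>j. ?y j + ?t j)" by (auto simp: proj_on_def)
  have t: "?t \<in> l2" using l2_proj_on(1)[OF assms(4)] .
  have "mat_apply a x i = mat_apply a ?y i + mat_apply a ?t i" for i
    by (subst split) (rule mat_apply_add[OF assms(1)])
  then have "mat_apply a ?y = (\<lambda>i. mat_apply a x i - mat_apply a ?t i)" by auto
  then have "l2norm (mat_apply a ?y) \<le> l2norm (mat_apply a x) + l2norm (mat_apply a ?t)"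
    using l2_diff(2) C assms(4) t by simp
  then show "l2norm (mat_apply a ?y) \<le> l2norm (mat_apply a x) + C * \<delta>"
    using C[OF t] mult_left_mono[OF assms(5,3)] by linarith
  have "l2norm x \<le> l2norm ?y + l2norm ?t"
    using l2_add(2)[OF l2_proj_on(1)[OF assms(4), of X] t] split[symmetric] by simp
  then show "l2norm x - \<delta> \<le> l2norm ?y" using assms(5) by linarith
qed

lemma lower_norm_approx:
  assumes "band_op w a" "lower_norm a < \<mu>"
  obtains x where "fin_support x" "l2norm x > 0" "l2norm (mat_apply a x) \<le> \<mu> * l2norm x"
proof -
  obtain C where C: "\<And>x. x \<in> l2 \<Longrightarrow> mat_apply a x \<in> l2 \<and> l2norm (mat_apply a x) \<le> C * l2norm x"
    using band_op_boundedE[OF assms(1)] by blast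
  define \<mu>' where "\<mu>' = (lower_norm a + \<mu>) / 2"
  have "lower_norm a < \<mu>'" "\<mu>' < \<mu>" using assms(2) by (simp_all add: \<mu>'_def)
  then obtain x where x: "x \<in> l2" "l2norm x = 1" "l2norm (mat_apply a x) < \<mu>'"
    using cInf_lessD[of "{l2norm (mat_apply a x) |x. x \<in> l2 \<and> l2norm x = 1}"]
      fin_support_unit_vector l2norm_unit_vector fin_support_imp_l2 unfolding lower_norm_def by blast
  have C0: "0 \<le> C" using C[OF x(1)] x(2) l2norm_nonneg[of "mat_apply a x"] by simp
  have \<mu>'0: "0 \<le> \<mu>'" using lower_norm_nonneg[of a] assms(2) by (simp add: \<mu>'_def)
  define \<delta> where "\<delta> = (\<mu> - \<mu>') / (C + \<mu> + 1)"
  have \<delta>: "0 < \<delta>" "\<delta> < 1" using C0 \<mu>'0 \<open>\<mu>' < \<mu>\<close> by (simp_all add: \<delta>_def)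
  have "\<delta> * (C + \<mu> + 1) = \<mu> - \<mu>'" using C0 \<mu>'0 \<open>\<mu>' < \<mu>\<close> by (simp add: \<delta>_def)
  then have \<delta>_slack: "\<mu>' + C * \<delta> \<le> \<mu> * (1 - \<delta>)" using \<delta>(1) by (auto simp: algebra_simps)
  obtain n where tail: "l2norm (proj_on (- {-n..n}) x) \<le> \<delta>"
    using l2norm_tail_le[OF x(1) \<delta>(1)] by blast
  let ?y = "proj_on {-n..n} x"
  note bounds = truncation_l2norm_bounds[OF band_op_banded[OF assms(1)] C C0 x(1) tail]
  have "fin_support ?y" by (rule fin_supportI[of "{-n..n}"]) (auto simp: proj_on_def)
  moreover have "0 < l2norm ?y" using bounds(2) x(2) \<delta>(2) by linarith
  moreover have "l2norm (mat_apply a ?y) \<le> \<mu> * l2norm ?y"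
    using bounds \<delta>_slack mult_left_mono[of "1 - \<delta>" "l2norm ?y" \<mu>] x \<mu>'0 \<open>\<mu>' < \<mu>\<close> by linarith
  ultimately show ?thesis by (rule that)
qed

section \<open>Norms on windows and column submatrices\<close>

definition window_norms :: "nat \<Rightarrow> (int \<Rightarrow> int \<Rightarrow> complex) \<Rightarrow> real set" where
  "window_norms N a = {l2norm (mat_apply a x) | x s.
     (\<forall>j. j \<notin> {s + 1..s + int N} \<longrightarrow> x j = 0) \<and> l2norm x = 1}"

lemma window_norms_memI:
  assumes "\<And>j. j \<notin> {s + 1..s + int N} \<Longrightarrow> x j = 0" "l2norm x = 1"
  shows "l2norm (mat_apply a x) \<in> window_norms N a"
  unfolding window_norms_def using assms by blast

lemma lower_norm_le_Inf_window_norms: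
  assumes "N \<ge> 1"
  shows "lower_norm a \<le> Inf (window_norms N a)"
  unfolding lower_norm_def
proof (rule cInf_superset_mono)
  have "l2norm (mat_apply a (\<lambda>j. if j = 1 then 1 else 0)) \<in> window_norms N a"
    by (rule window_norms_memI[where s=0]) (use assms l2norm_unit_vector in auto)
  then show "window_norms N a \<noteq> {}" by blast
  show "bdd_below {l2norm (mat_apply a x) |x. x \<in> l2 \<and> l2norm x = 1}"
    by (rule bdd_belowI[of _ 0]) (auto simp: l2norm_nonneg)
  show "window_norms N a \<subseteq> {l2norm (mat_apply a x) |x. x \<in> l2 \<and> l2norm x = 1}"
  proof
    fix v assume "v \<in> window_norms N a"
    then obtain x s where x: "\<And>j. j \<notin> {s + 1..s + int N} \<Longrightarrow> x j = 0" "l2norm x = 1"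
      and v: "v = l2norm (mat_apply a x)"
      unfolding window_norms_def by blast
    have "x \<in> l2" by (rule fin_support_imp_l2, rule fin_supportI[of "{s + 1..s + int N}"]) (simp_all add: x)
    then show "v \<in> {l2norm (mat_apply a x) |x. x \<in> l2 \<and> l2norm x = 1}" using v x(2) by blast
  qed
qed

lemma sum_int_interval_shift:
  fixes s p q :: int
  shows "(\<Sum>j\<in>{s + p..s + q}. f j) = (\<Sum>j\<in>{p..q}. f (s + j))"
proof -
  have "(+) s ` {p..q} = {s + p..s + q}" by (simp add: add.commute)
  moreover have "sum f ((+) s ` {p..q}) = (\<Sum>j\<in>{p..q}. f (s + j))"
    by (subst sum.reindex) (auto simp: inj_on_def)
  ultimately show ?thesis by (simp only:)
qed

lemma mat_apply_window:
  assumes "\<And>j. j \<notin> {s + 1..s + int N} \<Longrightarrow> x j = 0"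
  shows "mat_apply a x i = (\<Sum>j\<in>{1..int N}. a i (s + j) * x (s + j))"
  by (subst mat_apply_eq_sum[of "{s + 1..s + int N}"]) (simp_all add: assms sum_int_interval_shift)

lemma mat_apply_translate_window:
  assumes a: "banded w a" and b: "banded w b"
    and entries: "\<And>i j. i \<in> {1 - int w..int N + int w} \<Longrightarrow> j \<in> {1..int N} \<Longrightarrow>
                    b (s' + i) (s' + j) = a (s + i) (s + j)"
    and x: "\<And>j. j \<notin> {s + 1..s + int N} \<Longrightarrow> x j = 0"
  shows "mat_apply b (\<lambda>j. x (j + (s - s'))) i = mat_apply a x (i + (s - s'))"
proof -
  have y: "x (j + (s - s')) = 0" if "j \<notin> {s' + 1..s' + int N}" for j
    by (rule x) (use that in auto)
  have shift: "s' + j + (s - s') = s + j" for j by simp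
  have "mat_apply b (\<lambda>j. x (j + (s - s'))) i = (\<Sum>j\<in>{1..int N}. b i (s' + j) * x (s + j))"
    by (simp only: mat_apply_window[OF y] shift)
  also have "\<dots> = (\<Sum>j\<in>{1..int N}. a (i + (s - s')) (s + j) * x (s + j))"
  proof (rule sum.cong[OF refl])
    fix j assume j: "j \<in> {1..int N}"
    show "b i (s' + j) * x (s + j) = a (i + (s - s')) (s + j) * x (s + j)"
    proof (cases "i - s' \<in> {1 - int w..int N + int w}")
      case True
      have "b (s' + (i - s')) (s' + j) = a (s + (i - s')) (s + j)" by (rule entries[OF True j])
      moreover have "s' + (i - s') = i" "s + (i - s') = i + (s - s')" by simp_all
      ultimately show ?thesis by (simp only:)
    next
      case False
      then have "\<bar>i - (s' + j)\<bar> > int w" "\<bar>i + (s - s') - (s + j)\<bar> > int w"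
        using j by auto
      then show ?thesis using a b by (simp add: banded_def)
    qed
  qed
  also have "\<dots> = mat_apply a x (i + (s - s'))"
    by (rule mat_apply_window[OF x, symmetric])
  finally show ?thesis .
qed

lemma window_norms_subset:
  assumes "banded w a" "banded w b" "col_submatrices w N a = col_submatrices w N b"
  shows "window_norms N a \<subseteq> window_norms N b"
proof
  fix v assume "v \<in> window_norms N a"
  then obtain x s where x: "\<And>j. j \<notin> {s + 1..s + int N} \<Longrightarrow> x j = 0" "l2norm x = 1"
    and v: "v = l2norm (mat_apply a x)"
    unfolding window_norms_def by blast
  let ?R = "{1 - int w..int N + int w}" and ?C = "{1..int N}"
  have "(\<lambda>i j. if i \<in> ?R \<and> j \<in> ?C then a (s + i) (s + j) else 0) \<in> col_submatrices w N b"
    using assms(3) unfolding col_submatrices_def by blast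
  then obtain s' where s': "(\<lambda>i j. if i \<in> ?R \<and> j \<in> ?C then a (s + i) (s + j) else 0) =
                            (\<lambda>i j. if i \<in> ?R \<and> j \<in> ?C then b (s' + i) (s' + j) else 0)"
    unfolding col_submatrices_def by blast
  have entries: "b (s' + i) (s' + j) = a (s + i) (s + j)" if "i \<in> ?R" "j \<in> ?C" for i j
    using fun_cong[OF fun_cong[OF s', of i], of j] that by simp
  define y where "y = (\<lambda>j. x (j + (s - s')))"
  have "mat_apply b y = (\<lambda>i. mat_apply a x (i + (s - s')))"
    unfolding y_def by (rule ext, rule mat_apply_translate_window[OF assms(1,2)]) (use entries x(1) in auto)
  then have "v = l2norm (mat_apply b y)"
    using l2norm_translate[of "mat_apply a x" "s - s'"] by (simp add: v)
  also have "\<dots> \<in> window_norms N b"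
  proof (rule window_norms_memI)
    show "y j = 0" if "j \<notin> {s' + 1..s' + int N}" for j
      unfolding y_def by (rule x(1)) (use that in auto)
    show "l2norm y = 1" using x(2) by (simp add: y_def l2norm_translate)
  qed
  finally show "v \<in> window_norms N b" .
qed

lemma window_norms_eq:
  assumes "banded w a" "banded w b" "col_submatrices w N a = col_submatrices w N b"
  shows "window_norms N a = window_norms N b"
  using window_norms_subset[OF assms] window_norms_subset[OF assms(2,1) assms(3)[symmetric]] by blast

section \<open>Commutators with window projections\<close>

definition boundary_layer :: "nat \<Rightarrow> int set \<Rightarrow> int set" where
  "boundary_layer w W = {j. \<exists>i. \<bar>i - j\<bar> \<le> int w \<and> (i \<in> W) \<noteq> (j \<in> W)}"

lemma bound_constant_nonneg:
  assumes "\<And>x. fin_support x \<Longrightarrow> l2norm (mat_apply a x) \<le> K * l2norm x"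
  shows "0 \<le> K"
proof -
  have "l2norm (mat_apply a (\<lambda>j. if j = 0 then 1 else 0)) \<le> K"
    using assms[OF fin_support_unit_vector] l2norm_unit_vector by simp
  then show ?thesis using l2norm_nonneg order_trans by blast
qed

lemma commutator_proj_on_boundary_layer:
  fixes W :: "int set" and x :: "int \<Rightarrow> complex"
  assumes "banded w a"
  defines "y \<equiv> proj_on (boundary_layer w W) x"
  shows "mat_apply a (proj_on W x) i - proj_on W (mat_apply a x) i =
         mat_apply a (proj_on W y) i - proj_on W (mat_apply a y) i"
proof -
  have commutator: "mat_apply a (proj_on W v) i - proj_on W (mat_apply a v) i =
      (\<Sum>j\<in>{i - int w..i + int w}. a i j * proj_on W v j - (if i \<in> W then a i j * v j else 0))" for v
    by (cases "i \<in> W") (simp_all add: mat_apply_banded[OF assms(1)] proj_on_def sum_subtractf)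
  show ?thesis
    unfolding commutator
  proof (rule sum.cong[OF refl])
    fix j assume "j \<in> {i - int w..i + int w}"
    then have "(i \<in> W) \<noteq> (j \<in> W) \<Longrightarrow> j \<in> boundary_layer w W"
      unfolding boundary_layer_def by (auto simp: abs_le_iff intro!: exI[of _ i])
    then show "a i j * proj_on W x j - (if i \<in> W then a i j * x j else 0) =
               a i j * proj_on W y j - (if i \<in> W then a i j * y j else 0)"
      by (cases "i \<in> W"; cases "j \<in> W") (auto simp: y_def proj_on_def)
  qed
qed

lemma l2norm_commutator_le:
  assumes "banded w a" and K: "\<And>y. fin_support y \<Longrightarrow> l2norm (mat_apply a y) \<le> K * l2norm y"
    and "fin_support x"
  shows "l2norm (\<lambda>i. mat_apply a (proj_on W x) i - proj_on W (mat_apply a x) i)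
           \<le> 2 * K * l2norm (proj_on (boundary_layer w W) x)"
proof -
  let ?y = "proj_on (boundary_layer w W) x"
  have y: "fin_support ?y" using assms(3) by (rule fin_support_proj_on)
  have Ay: "fin_support (mat_apply a ?y)" by (rule fin_support_mat_apply[OF assms(1) y])
  have "l2norm (\<lambda>i. mat_apply a (proj_on W x) i - proj_on W (mat_apply a x) i) =
        l2norm (\<lambda>i. mat_apply a (proj_on W ?y) i - proj_on W (mat_apply a ?y) i)"
    using commutator_proj_on_boundary_layer[OF assms(1)] by simp
  also have "\<dots> \<le> l2norm (mat_apply a (proj_on W ?y)) + l2norm (proj_on W (mat_apply a ?y))"
    by (intro l2_diff(2) fin_support_imp_l2 fin_support_mat_apply[OF assms(1)]
        fin_support_proj_on y Ay)
  also have "\<dots> \<le> K * l2norm ?y + K * l2norm ?y"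
  proof (rule add_mono)
    have "l2norm (mat_apply a (proj_on W ?y)) \<le> K * l2norm (proj_on W ?y)"
      by (rule K[OF fin_support_proj_on[OF y]])
    also have "\<dots> \<le> K * l2norm ?y"
      by (rule mult_left_mono[OF l2_proj_on(2)[OF fin_support_imp_l2[OF y]] bound_constant_nonneg[OF K]])
    finally show "l2norm (mat_apply a (proj_on W ?y)) \<le> K * l2norm ?y" .
    show "l2norm (proj_on W (mat_apply a ?y)) \<le> K * l2norm ?y"
      using l2_proj_on(2)[OF fin_support_imp_l2[OF Ay]] K[OF y] by (rule order_trans)
  qed
  finally show ?thesis by simp
qed

lemma card_boundary_layer_windows:
  "card {s \<in> S. j \<in> boundary_layer w {s + 1..s + int N}} \<le> 4 * w"
proof -
  let ?L = "{j - int w..j + int w - 1}" and ?R = "{j - int N - int w..j - int N + int w - 1}"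
  have "{s \<in> S. j \<in> boundary_layer w {s + 1..s + int N}} \<subseteq> ?L \<union> ?R"
  proof
    fix s assume "s \<in> {s \<in> S. j \<in> boundary_layer w {s + 1..s + int N}}"
    then obtain i where "\<bar>i - j\<bar> \<le> int w" "(i \<in> {s + 1..s + int N}) \<noteq> (j \<in> {s + 1..s + int N})"
      by (auto simp: boundary_layer_def)
    then show "s \<in> ?L \<union> ?R" by (auto simp: abs_if split: if_splits)
  qed
  then have "card {s \<in> S. j \<in> boundary_layer w {s + 1..s + int N}} \<le> card (?L \<union> ?R)"
    by (rule card_mono[rotated]) simp
  also have "\<dots> \<le> card ?L + card ?R" by (rule card_Un_le)
  also have "\<dots> \<le> 4 * w" by simp
  finally show ?thesis .
qed

lemma sum_l2norm_proj_on_sq: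
  assumes "finite S" "finite X" "\<And>j. j \<notin> X \<Longrightarrow> x j = 0"
  shows "(\<Sum>s\<in>S. (l2norm (proj_on (F s) x))\<^sup>2) = (\<Sum>j\<in>X. real (card {s \<in> S. j \<in> F s}) * (cmod (x j))\<^sup>2)"
proof -
  have "(\<Sum>s\<in>S. (l2norm (proj_on (F s) x))\<^sup>2) = (\<Sum>s\<in>S. \<Sum>j\<in>X. if j \<in> F s then (cmod (x j))\<^sup>2 else 0)"
    by (intro sum.cong refl, subst l2norm_sq_eq_sum[OF assms(2)]) (auto simp: assms(3) proj_on_def intro!: sum.cong)
  also have "\<dots> = (\<Sum>j\<in>X. \<Sum>s\<in>S. if j \<in> F s then (cmod (x j))\<^sup>2 else 0)"
    by (rule sum.swap)
  also have "\<dots> = (\<Sum>j\<in>X. real (card {s \<in> S. j \<in> F s}) * (cmod (x j))\<^sup>2)"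
    using assms(1) by (simp add: sum.inter_filter[symmetric])
  finally show ?thesis .
qed

lemma L2_set_l2norm_windows:
  assumes "finite S" "finite X" "\<And>j. j \<notin> X \<Longrightarrow> v j = 0" "\<And>j. j \<in> X \<Longrightarrow> {j - int N..j - 1} \<subseteq> S"
  shows "L2_set (\<lambda>s. l2norm (proj_on {s + 1..s + int N} v)) S = sqrt N * l2norm v"
proof -
  have "card {s \<in> S. j \<in> {s + 1..s + int N}} = N" if "j \<in> X" for j
  proof -
    have "{s \<in> S. j \<in> {s + 1..s + int N}} = {j - int N..j - 1}" using assms(4)[OF that] by auto
    then show ?thesis by simp
  qed
  then have "(\<Sum>s\<in>S. (l2norm (proj_on {s + 1..s + int N} v))\<^sup>2) = N * (l2norm v)\<^sup>2"
    by (simp add: sum_l2norm_proj_on_sq[OF assms(1-3)] l2norm_sq_eq_sum[OF assms(2,3)] sum_distrib_left)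
  then show ?thesis by (simp add: L2_set_def real_sqrt_mult l2norm_nonneg)
qed

lemma L2_set_l2norm_commutators_le:
  assumes "banded w a" and K: "\<And>y. fin_support y \<Longrightarrow> l2norm (mat_apply a y) \<le> K * l2norm y"
    and "fin_support x" "finite S"
  shows "L2_set (\<lambda>s. l2norm (\<lambda>i. mat_apply a (proj_on {s + 1..s + int N} x) i
                                  - proj_on {s + 1..s + int N} (mat_apply a x) i)) S
           \<le> 4 * K * sqrt w * l2norm x"
proof -
  let ?B = "\<lambda>s. boundary_layer w {s + 1..s + int N}"
  define X where "X = {j. x j \<noteq> 0}"
  have X: "finite X" "\<And>j. j \<notin> X \<Longrightarrow> x j = 0"
    using assms(3) by (auto simp: X_def fin_support_def)
  have K0: "0 \<le> K" by (rule bound_constant_nonneg[OF K])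
  have "(\<Sum>s\<in>S. (l2norm (proj_on (?B s) x))\<^sup>2) = (\<Sum>j\<in>X. real (card {s \<in> S. j \<in> ?B s}) * (cmod (x j))\<^sup>2)"
    by (rule sum_l2norm_proj_on_sq[OF assms(4) X])
  also have "\<dots> \<le> (\<Sum>j\<in>X. real (4 * w) * (cmod (x j))\<^sup>2)"
    by (intro sum_mono mult_right_mono) (simp_all only: of_nat_le_iff card_boundary_layer_windows zero_le_power2)
  also have "\<dots> = 4 * w * (l2norm x)\<^sup>2"
    by (simp add: l2norm_sq_eq_sum[OF X] sum_distrib_left mult.assoc)
  also have "\<dots> = (2 * sqrt w * l2norm x)\<^sup>2"
    by (simp add: power_mult_distrib)
  finally have "L2_set (\<lambda>s. l2norm (proj_on (?B s) x)) S \<le> 2 * sqrt w * l2norm x"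
    unfolding L2_set_def by (rule real_le_lsqrt[rotated]) (simp add: l2norm_nonneg)
  then have "2 * K * L2_set (\<lambda>s. l2norm (proj_on (?B s) x)) S \<le> 2 * K * (2 * sqrt w * l2norm x)"
    by (rule mult_left_mono) (simp add: K0)
  moreover have "L2_set (\<lambda>s. l2norm (\<lambda>i. mat_apply a (proj_on {s + 1..s + int N} x) i
                                  - proj_on {s + 1..s + int N} (mat_apply a x) i)) S
       \<le> L2_set (\<lambda>s. 2 * K * l2norm (proj_on (?B s) x)) S"
    by (rule L2_set_mono) (simp_all add: l2norm_commutator_le[OF assms(1) K assms(3)] l2norm_nonneg)
  moreover have "L2_set (\<lambda>s. 2 * K * l2norm (proj_on (?B s) x)) S
       = 2 * K * L2_set (\<lambda>s. l2norm (proj_on (?B s) x)) S"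
    by (rule L2_set_right_distrib[symmetric]) (simp add: K0)
  ultimately show ?thesis by linarith
qed

section \<open>Convergence of lower norms\<close>

lemma exists_le_of_L2_set_le:
  fixes f g :: "'a \<Rightarrow> real"
  assumes "finite S" "L2_set f S \<le> c * L2_set g S" "0 \<le> c" "0 < L2_set g S"
    and "\<And>s. s \<in> S \<Longrightarrow> 0 \<le> f s" "\<And>s. s \<in> S \<Longrightarrow> 0 \<le> g s"
  shows "\<exists>s\<in>S. 0 < g s \<and> f s \<le> c * g s"
proof (rule ccontr)
  assume "\<not> ?thesis"
  then have less: "c * g s < f s" if "s \<in> S" "0 < g s" for s
    using that by force
  have le: "(c * g s)\<^sup>2 \<le> (f s)\<^sup>2" if "s \<in> S" for s
  proof (cases "0 < g s")
    case True
    then show ?thesis using less[OF that True] assms(3) assms(6)[OF that] by (intro power_mono) simp_all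
  next
    case False
    then show ?thesis using assms(6)[OF that] by simp
  qed
  obtain s0 where s0: "s0 \<in> S" "0 < g s0"
    using assms(4,6) L2_set_0'[of S g] by force
  have "(c * g s0)\<^sup>2 < (f s0)\<^sup>2"
    using less[OF s0] assms(3) s0(2) by (intro power_strict_mono) simp_all
  then have "(\<Sum>s\<in>S. (c * g s)\<^sup>2) < (\<Sum>s\<in>S. (f s)\<^sup>2)"
    using le s0(1) by (intro sum_strict_mono_ex1[OF assms(1)]) blast+
  then have "L2_set (\<lambda>s. c * g s) S < L2_set f S" by (simp add: L2_set_def)
  with assms(2,3) show False by (simp add: L2_set_right_distrib)
qed

lemma L2_set_l2norm_mat_apply_windows_le:
  assumes banded: "banded w a"
    and K: "\<And>y. fin_support y \<Longrightarrow> l2norm (mat_apply a y) \<le> K * l2norm y"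
    and x: "fin_support x" "l2norm (mat_apply a x) \<le> \<mu> * l2norm x" and N: "N \<ge> 1"
    and S: "finite S" "finite X" "\<And>j. j \<in> X \<Longrightarrow> {j - int N..j - 1} \<subseteq> S"
    and X: "\<And>j. j \<notin> X \<Longrightarrow> x j = 0" "\<And>j. j \<notin> X \<Longrightarrow> mat_apply a x j = 0"
  shows "L2_set (\<lambda>s. l2norm (mat_apply a (proj_on {s + 1..s + int N} x))) S
           \<le> (\<mu> + 4 * K * sqrt (w / N)) * L2_set (\<lambda>s. l2norm (proj_on {s + 1..s + int N} x)) S"
proof -
  let ?P = "\<lambda>s. proj_on {s + 1..s + int N}"
  define e where "e s = (\<lambda>i. mat_apply a (?P s x) i - ?P s (mat_apply a x) i)" for s
  have Ax: "fin_support (mat_apply a x)" by (rule fin_support_mat_apply[OF banded x(1)])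
  have windows_x: "L2_set (\<lambda>s. l2norm (?P s x)) S = sqrt N * l2norm x"
    by (rule L2_set_l2norm_windows[OF S(1,2)]) (simp_all add: X S(3))
  have windows_Ax: "L2_set (\<lambda>s. l2norm (?P s (mat_apply a x))) S = sqrt N * l2norm (mat_apply a x)"
    by (rule L2_set_l2norm_windows[OF S(1,2)]) (simp_all add: X S(3))
  have "L2_set (\<lambda>s. l2norm (mat_apply a (?P s x))) S
      \<le> L2_set (\<lambda>s. l2norm (?P s (mat_apply a x)) + l2norm (e s)) S"
  proof (rule L2_set_mono)
    fix s
    have "mat_apply a (?P s x) = (\<lambda>i. ?P s (mat_apply a x) i + e s i)" by (simp add: e_def)
    moreover have "e s \<in> l2" unfolding e_def
      by (intro l2_diff(1) fin_support_imp_l2 fin_support_mat_apply[OF banded]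
          fin_support_proj_on x(1) Ax)
    ultimately show "l2norm (mat_apply a (?P s x)) \<le> l2norm (?P s (mat_apply a x)) + l2norm (e s)"
      using l2_add(2)[OF fin_support_imp_l2[OF fin_support_proj_on[OF Ax]]] by simp
  qed (rule l2norm_nonneg)
  also have "\<dots> \<le> L2_set (\<lambda>s. l2norm (?P s (mat_apply a x))) S + L2_set (\<lambda>s. l2norm (e s)) S"
    by (rule L2_set_triangle_ineq)
  also have "\<dots> \<le> sqrt N * l2norm (mat_apply a x) + 4 * K * sqrt w * l2norm x"
    unfolding e_def windows_Ax
    using L2_set_l2norm_commutators_le[OF banded K x(1) S(1)] by simp
  also have "\<dots> \<le> (\<mu> + 4 * K * sqrt (w / N)) * (sqrt N * l2norm x)"
    using mult_left_mono[OF x(2), of "sqrt N"] N by (simp add: real_sqrt_divide algebra_simps)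
  also have "\<dots> = (\<mu> + 4 * K * sqrt (w / N)) * L2_set (\<lambda>s. l2norm (?P s x)) S"
    unfolding windows_x ..
  finally show ?thesis .
qed

lemma exists_window_le:
  assumes banded: "banded w a"
    and K: "\<And>y. fin_support y \<Longrightarrow> l2norm (mat_apply a y) \<le> K * l2norm y"
    and x: "fin_support x" "0 < l2norm x" "l2norm (mat_apply a x) \<le> \<mu> * l2norm x"
    and N: "N \<ge> 1"
  obtains s where "0 < l2norm (proj_on {s + 1..s + int N} x)"
    "l2norm (mat_apply a (proj_on {s + 1..s + int N} x))
       \<le> (\<mu> + 4 * K * sqrt (w / N)) * l2norm (proj_on {s + 1..s + int N} x)"
proof -
  let ?P = "\<lambda>s. proj_on {s + 1..s + int N}"
  have K0: "0 \<le> K" by (rule bound_constant_nonneg[OF K])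
  have "0 \<le> \<mu> * l2norm x" using x(3) l2norm_nonneg order_trans by blast
  then have \<mu>0: "0 \<le> \<mu>" using x(2) by (simp add: zero_le_mult_iff)
  obtain n where n: "\<And>j. j \<notin> {-n..n} \<Longrightarrow> x j = 0"
    using fin_support_intervalE[OF x(1)] by blast
  define I where "I = {-n - int w..n + int w}"
  define S where "S = {-n - int w - int N..n + int w}"
  have fin: "finite S" "finite I" by (simp_all add: I_def S_def)
  have cover: "{j - int N..j - 1} \<subseteq> S" if "j \<in> I" for j using that by (auto simp: I_def S_def)
  have xI: "x j = 0" if "j \<notin> I" for j using that n by (auto simp: I_def)
  have AxI: "mat_apply a x j = 0" if "j \<notin> I" for j
    by (rule mat_apply_eq_0[OF banded, where p = "-n" and q = n]) (use n that in \<open>auto simp: I_def\<close>)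
  have "L2_set (\<lambda>s. l2norm (?P s x)) S = sqrt N * l2norm x"
    by (rule L2_set_l2norm_windows[OF fin]) (simp_all add: xI cover)
  moreover have "L2_set (\<lambda>s. l2norm (mat_apply a (?P s x))) S
           \<le> (\<mu> + 4 * K * sqrt (w / N)) * L2_set (\<lambda>s. l2norm (?P s x)) S"
    by (rule L2_set_l2norm_mat_apply_windows_le[OF banded K x(1,3) N fin]) (simp_all add: cover xI AxI)
  ultimately have "\<exists>s\<in>S. 0 < l2norm (?P s x) \<and>
      l2norm (mat_apply a (?P s x)) \<le> (\<mu> + 4 * K * sqrt (w / N)) * l2norm (?P s x)"
    by (intro exists_le_of_L2_set_le[OF fin(1)]) (use x(2) N \<mu>0 K0 in \<open>auto simp: l2norm_nonneg\<close>)
  then show ?thesis using that by blast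
qed

lemma Inf_window_norms_le:
  assumes "band_op w a" and K: "\<And>x. fin_support x \<Longrightarrow> l2norm (mat_apply a x) \<le> K * l2norm x"
    and N: "N \<ge> 1"
  shows "Inf (window_norms N a) \<le> lower_norm a + 4 * K * sqrt (w / N)"
proof -
  have banded: "banded w a" using assms(1) by (rule band_op_banded)
  have "Inf (window_norms N a) - 4 * K * sqrt (w / N) \<le> \<mu>" if \<mu>: "lower_norm a < \<mu>" for \<mu>
  proof -
    obtain x where x: "fin_support x" "0 < l2norm x" "l2norm (mat_apply a x) \<le> \<mu> * l2norm x"
      using lower_norm_approx[OF assms(1) \<mu>] by blast
    obtain s where z: "0 < l2norm (proj_on {s + 1..s + int N} x)"
      "l2norm (mat_apply a (proj_on {s + 1..s + int N} x))
         \<le> (\<mu> + 4 * K * sqrt (w / N)) * l2norm (proj_on {s + 1..s + int N} x)"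
      using exists_window_le[OF banded K x N] by blast
    let ?z = "proj_on {s + 1..s + int N} x"
    let ?y = "\<lambda>j. complex_of_real (1 / l2norm ?z) * ?z j"
    note y = normalized_vector[OF banded fin_support_imp_l2[OF fin_support_proj_on[OF x(1)]] z(1)]
    have vanish: "?y j = 0" if "j \<notin> {s + 1..s + int N}" for j
      using that by (auto simp: proj_on_def)
    have "l2norm (mat_apply a ?y) \<in> window_norms N a"
      by (intro window_norms_memI[where s = s] vanish y(2))
    then have "Inf (window_norms N a) \<le> l2norm (mat_apply a ?y)"
      by (rule cInf_lower) (auto simp: window_norms_def l2norm_nonneg intro!: bdd_belowI[of _ 0])
    also have "\<dots> \<le> \<mu> + 4 * K * sqrt (w / N)"
      unfolding y(3) using z by (simp add: divide_le_eq)
    finally show ?thesis by simp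
  qed
  then have "Inf (window_norms N a) - 4 * K * sqrt (w / N) \<le> lower_norm a"
    by (rule dense_ge)
  then show ?thesis by simp
qed

lemma lower_norm_dist_le:
  assumes "band_op w a" "band_op w b"
    and "\<And>x. fin_support x \<Longrightarrow> l2norm (mat_apply a x) \<le> K * l2norm x"
    and "\<And>x. fin_support x \<Longrightarrow> l2norm (mat_apply b x) \<le> K * l2norm x"
    and "N \<ge> 1" "col_submatrices w N a = col_submatrices w N b"
  shows "\<bar>lower_norm a - lower_norm b\<bar> \<le> 4 * K * sqrt (w / N)"
proof -
  have "Inf (window_norms N a) \<le> lower_norm a + 4 * K * sqrt (w / N)"
    by (rule Inf_window_norms_le[OF assms(1) _ assms(5)]) (rule assms(3))
  moreover have "Inf (window_norms N b) \<le> lower_norm b + 4 * K * sqrt (w / N)"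
    by (rule Inf_window_norms_le[OF assms(2) _ assms(5)]) (rule assms(4))
  ultimately show ?thesis
    using lower_norm_le_Inf_window_norms[OF assms(5), of a] lower_norm_le_Inf_window_norms[OF assms(5), of b]
      window_norms_eq[OF band_op_banded[OF assms(1)] band_op_banded[OF assms(2)] assms(6)]
    by (auto simp: abs_le_iff)
qed

lemma lower_norm_tendsto:
  assumes "band_op w A" "\<And>m. band_op w (As m)"
    and "\<And>x. fin_support x \<Longrightarrow> l2norm (mat_apply A x) \<le> K * l2norm x"
    and "\<And>m x. fin_support x \<Longrightarrow> l2norm (mat_apply (As m) x) \<le> K * l2norm x"
    and cols: "\<forall>N. \<exists>m0. \<forall>m\<ge>m0. col_submatrices w N (As m) = col_submatrices w N A"
  shows "(\<lambda>m. lower_norm (As m)) \<longlonglongrightarrow> lower_norm A"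
proof (rule LIMSEQ_I)
  fix r :: real assume "0 < r"
  have "(\<lambda>N. 4 * K * sqrt (w / real N)) \<longlonglongrightarrow> 4 * K * sqrt 0"
    by (intro tendsto_intros)
  then have "\<forall>\<^sub>F N in sequentially. 4 * K * sqrt (w / real N) < r \<and> 1 \<le> N"
    using \<open>0 < r\<close> by (auto intro: eventually_conj order_tendstoD(2) eventually_ge_at_top)
  then obtain N where N: "1 \<le> N" "4 * K * sqrt (w / real N) < r"
    by (auto simp: eventually_sequentially)
  obtain m0 where "\<forall>m\<ge>m0. col_submatrices w N (As m) = col_submatrices w N A"
    using cols by blast
  then have "\<bar>lower_norm (As m) - lower_norm A\<bar> \<le> 4 * K * sqrt (w / real N)" if "m \<ge> m0" for m
    using that by (intro lower_norm_dist_le[OF assms(2,1) _ _ N(1)] assms(3,4)) auto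
  then have "norm (lower_norm (As m) - lower_norm A) < r" if "m \<ge> m0" for m
    using that N(2) by fastforce
  then show "\<exists>m0. \<forall>m\<ge>m0. norm (lower_norm (As m) - lower_norm A) < r" by blast
qed

section \<open>Operator norm and shifts\<close>

lemma l2norm_mat_apply_le_opnorm:
  assumes "band_op w a" "x \<in> l2"
  shows "l2norm (mat_apply a x) \<le> opnorm a * l2norm x"
proof -
  obtain C where C: "\<And>x. x \<in> l2 \<Longrightarrow> mat_apply a x \<in> l2 \<and> l2norm (mat_apply a x) \<le> C * l2norm x"
    using band_op_boundedE[OF assms(1)] by blast
  show ?thesis
  proof (cases "l2norm x = 0")
    case True
    then show ?thesis using C[OF assms(2)] by simp
  next
    case False
    then have pos: "0 < l2norm x" using l2norm_nonneg[of x] by simp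
    let ?y = "\<lambda>j. complex_of_real (1 / l2norm x) * x j"
    note y = normalized_vector[OF band_op_banded[OF assms(1)] assms(2) pos]
    have "bdd_above {l2norm (mat_apply a x) |x. x \<in> l2 \<and> l2norm x = 1}"
      by (rule bdd_aboveI[of _ C]) (use C in force)
    then have "l2norm (mat_apply a ?y) \<le> opnorm a"
      unfolding opnorm_def by (rule cSup_upper[rotated]) (use y(1,2) in blast)
    then show ?thesis using pos unfolding y(3) by (simp add: divide_le_eq)
  qed
qed

lemma banded_shift_id: "banded w a \<Longrightarrow> banded w (shift_id a lam)"
  by (auto simp: banded_def shift_id_def)

lemma shift_id_0: "shift_id a 0 = a"
  by (simp add: shift_id_def)

lemma mat_apply_shift_id:
  assumes "banded w a"
  shows "mat_apply (shift_id a lam) x = (\<lambda>i. mat_apply a x i - lam * x i)"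
proof
  fix i
  have "mat_apply (shift_id a lam) x i =
      (\<Sum>j\<in>{i - int w..i + int w}. a i j * x j - (if j = i then lam * x j else 0))"
    unfolding mat_apply_banded[OF banded_shift_id[OF assms]] by (auto simp: shift_id_def algebra_simps intro!: sum.cong)
  then show "mat_apply (shift_id a lam) x i = mat_apply a x i - lam * x i"
    by (simp add: sum_subtractf mat_apply_banded[OF assms])
qed

lemma l2_shift_id:
  assumes "banded w a" "x \<in> l2" "mat_apply a x \<in> l2"
  shows "mat_apply (shift_id a lam) x \<in> l2"
    and "l2norm (mat_apply (shift_id a lam) x) \<le> l2norm (mat_apply a x) + cmod lam * l2norm x"
  unfolding mat_apply_shift_id[OF assms(1)]
  using l2_diff[OF assms(3) l2_cmult[OF assms(2), of lam]] l2norm_cmult[of lam x] by simp_all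

lemma band_op_shift_id:
  assumes "band_op w a"
  shows "band_op w (shift_id a lam)"
proof -
  have banded: "banded w a" using assms by (rule band_op_banded)
  obtain C where C: "\<And>x. x \<in> l2 \<Longrightarrow> mat_apply a x \<in> l2 \<and> l2norm (mat_apply a x) \<le> C * l2norm x"
    using band_op_boundedE[OF assms] by blast
  have "mat_apply (shift_id a lam) x \<in> l2 \<and>
      l2norm (mat_apply (shift_id a lam) x) \<le> (C + cmod lam) * l2norm x" if "x \<in> l2" for x
    using l2_shift_id[OF banded that, of lam] C[OF that] by (auto simp: algebra_simps)
  then show ?thesis
    using banded_shift_id[OF banded] by (auto simp: band_op_def banded_def)
qed

lemma l2norm_mat_apply_shift_id_le:
  assumes "banded w a" "\<And>x. fin_support x \<Longrightarrow> l2norm (mat_apply a x) \<le> K * l2norm x"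
    and "fin_support x"
  shows "l2norm (mat_apply (shift_id a lam) x) \<le> (K + cmod lam) * l2norm x"
  using l2_shift_id(2)[OF assms(1) fin_support_imp_l2[OF assms(3)]
      fin_support_imp_l2[OF fin_support_mat_apply[OF assms(1,3)]], of lam] assms(2)[OF assms(3)]
  by (simp add: algebra_simps)

lemma col_submatrices_shift_id:
  assumes "col_submatrices w N a = col_submatrices w N b"
  shows "col_submatrices w N (shift_id a lam) = col_submatrices w N (shift_id b lam)"
proof -
  define shift where "shift M = (\<lambda>i j. if i \<in> {1 - int w..int N + int w} \<and> j \<in> {1..int N}
                                          then M i j - (if i = j then lam else 0) else 0)"
    for M :: "int \<Rightarrow> int \<Rightarrow> complex"
  define sub where "sub c k = (\<lambda>i j. if i \<in> {1 - int w..int N + int w} \<and> j \<in> {1..int N}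
                                        then c (k + i) (k + j) else 0)"
    for c :: "int \<Rightarrow> int \<Rightarrow> complex" and k
  have range: "col_submatrices w N c = range (sub c)" for c
    by (auto simp: col_submatrices_def sub_def)
  have "sub (shift_id c lam) k = shift (sub c k)" for c k
    by (auto simp: sub_def shift_def shift_id_def fun_eq_iff)
  then have "col_submatrices w N (shift_id c lam) = shift ` col_submatrices w N c" for c
    unfolding range by (simp add: image_image)
  then show ?thesis using assms by simp
qed

theorem proposition4p9:
  fixes A :: "int \<Rightarrow> int \<Rightarrow> complex" and As :: "nat \<Rightarrow> int \<Rightarrow> int \<Rightarrow> complex" and w :: nat
  assumes "band_op w A"
    and "\<And>m. band_op w (As m)"
    and "bdd_above (range (\<lambda>m. opnorm (As m)))"
    and "\<forall>N::nat. \<exists>m0. \<forall>m\<ge>m0. col_submatrices w N (As m) = col_submatrices w N A"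
  shows "((\<lambda>m. lower_norm (As m)) \<longlonglongrightarrow> lower_norm A) \<and>
           (\<forall>lam. (\<lambda>m. lower_norm (shift_id (As m) lam)) \<longlonglongrightarrow> lower_norm (shift_id A lam))"
proof -
  obtain M where M: "\<And>m. opnorm (As m) \<le> M" using assms(3) by (auto simp: bdd_above_def)
  define K where "K = max M (opnorm A)"
  have bound: "l2norm (mat_apply a x) \<le> K * l2norm x"
    if "band_op w a" "opnorm a \<le> K" "fin_support x" for a x
    using l2norm_mat_apply_le_opnorm[OF that(1) fin_support_imp_l2[OF that(3)]]
      mult_right_mono[OF that(2) l2norm_nonneg[of x]] by linarith
  have shifted: "(\<lambda>m. lower_norm (shift_id (As m) lam)) \<longlonglongrightarrow> lower_norm (shift_id A lam)" for lam
  proof (rule lower_norm_tendsto[where K = "K + cmod lam"])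
    show "band_op w (shift_id A lam)" "\<And>m. band_op w (shift_id (As m) lam)"
      by (simp_all add: band_op_shift_id assms(1,2))
    show "l2norm (mat_apply (shift_id A lam) x) \<le> (K + cmod lam) * l2norm x" if "fin_support x" for x
      by (rule l2norm_mat_apply_shift_id_le[OF band_op_banded[OF assms(1)] bound[OF assms(1)] that]) (simp add: K_def)
    show "l2norm (mat_apply (shift_id (As m) lam) x) \<le> (K + cmod lam) * l2norm x" if "fin_support x" for m x
      by (rule l2norm_mat_apply_shift_id_le[OF band_op_banded[OF assms(2)] bound[OF assms(2)] that])
        (use M[of m] in \<open>simp add: K_def\<close>)
    show "\<forall>N. \<exists>m0. \<forall>m\<ge>m0. col_submatrices w N (shift_id (As m) lam) = col_submatrices w N (shift_id A lam)"
      using assms(4) col_submatrices_shift_id by metis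
  qed
  show ?thesis using shifted[of 0] shifted by (simp add: shift_id_0)
qed

end
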